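(* Let $p\in(0,1)$ be fixed and let $r\ge 3$. Let $k\ge r+1$ be the least integer satisfying $\frac{k!}{(k-r)!\,k^r}>p$. Then $$\frac{H_r(n,p)}{E(n,p)}\ge\left(\frac{(k-r+1)!\,k^{r-1}}{k!}\right)^{n-o(n)}$$ (as $n\to\infty$ over those $n$ for which $p\binom{n}{r}$ is an integer).
   Context: An $r$-graph $G$ has a vertex set and an edge set consisting of $r$-element subsets of the vertex set. An $n$-vertex $r$-graph has density $p$ if it has exactly $p\binom{n}{r}$ edges. A Hamiltonian cycle of an $n$-vertex $r$-graph $G$ is given by an ordering $v_1,\dots,v_n$ of its vertices such that for every $i$ the set $\{v_i,\dots,v_{i+r-1}\}$ (indices modulo $n$) is an edge; the cycle is identified with this set of $n$ edges. $H(G)$ is the number of Hamiltonian cycles of $G$. $H_r(n,p)$ is the maximum of $H(G)$ over all $n$-vertex $r$-graphs of density $p$. $E(n,p)=p^n(n-1)!/2$. *)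

theory Defs
  imports Complex_Main
begin

definition rgraph :: "nat \<Rightarrow> nat \<Rightarrow> nat set set \<Rightarrow> bool" where
  "rgraph n r E \<longleftrightarrow> (\<forall>e\<in>E. e \<subseteq> {..<n} \<and> card e = r)"

definition has_density :: "nat \<Rightarrow> nat \<Rightarrow> real \<Rightarrow> nat set set \<Rightarrow> bool" where
  "has_density n r p E \<longleftrightarrow> real (card E) = p * real (n choose r)"

definition window :: "nat \<Rightarrow> nat \<Rightarrow> (nat \<Rightarrow> nat) \<Rightarrow> nat \<Rightarrow> nat set" where
  "window n r v i = v ` {(i + j) mod n | j. j < r}"

text \<open>Hamiltonian cycles, identified with their sets of n edges.\<close>
definition ham_cycles :: "nat \<Rightarrow> nat \<Rightarrow> nat set set \<Rightarrow> nat set set set" where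
  "ham_cycles n r E = {C. \<exists>v. bij_betw v {..<n} {..<n} \<and> (\<forall>i<n. window n r v i \<in> E)
                          \<and> C = window n r v ` {..<n}}"

definition num_ham :: "nat \<Rightarrow> nat \<Rightarrow> nat set set \<Rightarrow> nat" where
  "num_ham n r E = card (ham_cycles n r E)"

definition H_max :: "nat \<Rightarrow> nat \<Rightarrow> real \<Rightarrow> nat" where
  "H_max r n p = Max {num_ham n r E | E. rgraph n r E \<and> has_density n r p E}"

definition E_exp :: "nat \<Rightarrow> real \<Rightarrow> real" where
  "E_exp n p = p ^ n * fact (n - 1) / 2"

end

(*
  Colour the vertices 0, ..., n - 2 with k colours by a
  map f and call n - 1 special; the r-sets that contain n - 1 or are rainbow form an r-graph K with
  at most n^(r-1) + (k choose r) (n/k)^r edges, by Maclaurin's inequality for the colour class sizes.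
  An ordering of 0, ..., n - 2 whose colour sequence has no repetition among r consecutive entries,
  followed by n - 1, is a Hamiltonian cycle of K.  There are at least (k - r + 1)^(n-1) such colour
  sequences, so averaging over f gives an f with (n - 1)! ((k - r + 1) / k)^(n-1) such orderings, and
  each cycle comes from at most n^r orderings.  Averaging over the m-edge subgraphs of K (or taking a
  supergraph if K is too small) keeps a fraction ((m - n) / |K|)^n of the cycles.  As m / |K| tends
  to p / q with q = k! / ((k - r)! k^r) > p, comparing with E(n,p) = p^n (n - 1)! / 2 leaves the
  base (k - r + 1) / (k q) = (k - r + 1)! k^(r-1) / k! raised to n - o(n).
*)

theory Submission
  imports Defs "HOL-Combinatorics.Permutations" "HOL-Library.FuncSet"
begin

section \<open>Locally distinct words\<close>

definition locally_distinct :: "nat \<Rightarrow> 'a list \<Rightarrow> bool" where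
  "locally_distinct r xs \<longleftrightarrow> (\<forall>a b. a < b \<and> b < a + r \<and> b < length xs \<longrightarrow> xs ! a \<noteq> xs ! b)"

definition locally_distinct_words :: "nat \<Rightarrow> nat \<Rightarrow> nat \<Rightarrow> nat list set" where
  "locally_distinct_words r k L = {xs. set xs \<subseteq> {..<k} \<and> length xs = L \<and> locally_distinct r xs}"

lemma locally_distinct_snoc:
  assumes "locally_distinct r xs" and "y \<notin> set (drop (length xs + 1 - r) xs)"
  shows "locally_distinct r (xs @ [y])"
  unfolding locally_distinct_def
proof (intro allI impI)
  fix a b assume ab: "a < b \<and> b < a + r \<and> b < length (xs @ [y])"
  show "(xs @ [y]) ! a \<noteq> (xs @ [y]) ! b"
  proof (cases "b < length xs")
    case True
    then show ?thesis using assms(1) ab by (auto simp: locally_distinct_def nth_append)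
  next
    case False
    then have b: "b = length xs" using ab by simp
    have "xs ! a \<in> set (drop (length xs + 1 - r) xs)"
      using ab b by (auto simp: in_set_conv_nth intro!: exI[of _ "a - (length xs + 1 - r)"])
    then show ?thesis using assms(2) ab b by (auto simp: nth_append)
  qed
qed

lemma finite_locally_distinct_words: "finite (locally_distinct_words r k L)"
  by (rule finite_subset[OF _ finite_lists_length_eq[of "{..<k}" L]])
     (auto simp: locally_distinct_words_def)

lemma card_locally_distinct_words: "(k - (r - 1)) ^ L \<le> card (locally_distinct_words r k L)"
proof (induction L)
  case 0
  have "locally_distinct_words r k 0 = {[]}" by (auto simp: locally_distinct_words_def locally_distinct_def)
  then show ?case by simp
next
  case (Suc L)
  let ?W = "locally_distinct_words r k"
  define free where "free xs = {..<k} - set (drop (length xs + 1 - r) xs)" for xs :: "nat list"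
  have card_free: "k - (r - 1) \<le> card (free xs)" for xs
  proof -
    have "card (set (drop (length xs + 1 - r) xs)) \<le> r - 1"
      using card_length[of "drop (length xs + 1 - r) xs"] by simp
    moreover have "k - card (set (drop (length xs + 1 - r) xs)) \<le> card (free xs)"
      unfolding free_def using diff_card_le_card_Diff[of _ "{..<k}"] by simp
    ultimately show ?thesis by linarith
  qed
  let ?S = "SIGMA xs:?W L. free xs"
  have "card (?W L) * (k - (r - 1)) \<le> (\<Sum>xs\<in>?W L. card (free xs))"
    using sum_bounded_below[of "?W L" "k - (r - 1)" "\<lambda>xs. card (free xs)"] card_free
    by (simp add: mult.commute)
  also have "\<dots> = card ?S"
    using finite_locally_distinct_words by (simp add: card_SigmaI free_def)
  also have "\<dots> \<le> card (?W (Suc L))"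
  proof (rule card_inj_on_le[OF _ _ finite_locally_distinct_words])
    show "inj_on (\<lambda>(xs, y). xs @ [y]) ?S"
      by (auto simp: inj_on_def locally_distinct_words_def)
    show "(\<lambda>(xs, y). xs @ [y]) ` ?S \<subseteq> ?W (Suc L)"
      by (auto simp: locally_distinct_words_def free_def intro: locally_distinct_snoc)
  qed
  finally show ?case using Suc.IH by (metis le_trans mult_le_mono1 power_Suc2)
qed

section \<open>Tight Hamiltonian cycles\<close>

definition cyclic_interval :: "nat \<Rightarrow> nat \<Rightarrow> nat \<Rightarrow> nat set" where
  "cyclic_interval n r j = {(j + t) mod n | t. t < r}"

lemma window_eq_image_cyclic_interval: "window n r v j = v ` cyclic_interval n r j"
  by (simp add: window_def cyclic_interval_def)

lemma cyclic_interval_subset: "0 < n \<Longrightarrow> cyclic_interval n r j \<subseteq> {..<n}"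
  by (auto simp: cyclic_interval_def)

lemma cyclic_interval_eq_atLeastLessThan:
  assumes "j + r \<le> n"
  shows "cyclic_interval n r j = {j..<j + r}"
proof (intro set_eqI iffI)
  fix x assume "x \<in> {j..<j + r}"
  then have "x = (j + (x - j)) mod n \<and> x - j < r" using assms by auto
  then show "x \<in> cyclic_interval n r j" unfolding cyclic_interval_def by blast
qed (use assms in \<open>auto simp: cyclic_interval_def\<close>)

lemma card_cyclic_interval:
  assumes "r \<le> n" "j < n"
  shows "card (cyclic_interval n r j) = r"
proof -
  have "inj_on (\<lambda>t. (j + t) mod n) {..<r}"
    using assms by (auto simp: inj_on_def mod_if split: if_splits)
  moreover have "cyclic_interval n r j = (\<lambda>t. (j + t) mod n) ` {..<r}"
    by (auto simp: cyclic_interval_def)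
  ultimately show ?thesis by (simp add: card_image)
qed

lemma cyclic_interval_start:
  assumes sub: "{a..<a + s} \<subseteq> cyclic_interval n (Suc s) j"
    and "0 < a" "a + s < n" "0 < s" "j < n"
  shows "j = a - 1 \<or> j = a"
proof -
  have offset: "\<exists>t \<le> s. j + t = x \<or> j + t = x + n" if x: "x \<in> {a..<a + s}" for x
  proof -
    obtain t where t: "t \<le> s" "x = (j + t) mod n"
      using subsetD[OF sub x] by (auto simp: cyclic_interval_def less_Suc_eq_le)
    then have "j + t = x \<or> j + t = x + n" using assms by (auto simp: mod_if)
    with t show ?thesis by blast
  qed
  have "a \<in> {a..<a + s}" "a + s - 1 \<in> {a..<a + s}" using assms by auto
  then obtain t1 t2 where "t1 \<le> s" "j + t1 = a \<or> j + t1 = a + n"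
    and "t2 \<le> s" "j + t2 = a + s - 1 \<or> j + t2 = a + s - 1 + n"
    using offset by meson
  \<comment> \<open>\<open>j - 1\<close> would need the offset \<open>n - 1 > s\<close>\<close>
  moreover have "j - 1 \<notin> {a..<a + s} \<or> j = 0"
    using offset[of "j - 1"] assms by fastforce
  ultimately show ?thesis using assms by auto
qed

lemma cycle_edges_containing_segment:
  assumes u: "inj u" and r: "2 \<le> r" and i: "r \<le> i" "i < n"
  defines "S \<equiv> u ` {i + 1 - r..<i}"
  shows "{e \<in> window n r u ` {..<n}. S \<subseteq> e} = {insert (u (i - r)) S, insert (u i) S}"
proof -
  have "{i - r..<i - r + r} = insert (i - r) {i + 1 - r..<i}"
    and "{i + 1 - r..<i + 1 - r + r} = insert i {i + 1 - r..<i}"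
    using r i by auto
  then have left: "window n r u (i - r) = insert (u (i - r)) S"
    and right: "window n r u (i + 1 - r) = insert (u i) S"
    using r i by (simp_all add: S_def window_eq_image_cyclic_interval cyclic_interval_eq_atLeastLessThan)
  have "j = i - r \<or> j = i + 1 - r" if "j < n" "S \<subseteq> window n r u j" for j
  proof -
    have "{i + 1 - r..<i + 1 - r + (r - 1)} \<subseteq> cyclic_interval n (Suc (r - 1)) j"
      using that r i u by (simp add: S_def window_eq_image_cyclic_interval inj_image_subset_iff)
    then show ?thesis using cyclic_interval_start[of "i + 1 - r" "r - 1" n j] that r i by fastforce
  qed
  moreover have "i - r < n" "i + 1 - r < n" using r i by auto
  moreover have "S \<subseteq> window n r u (i - r)" "S \<subseteq> window n r u (i + 1 - r)"
    unfolding left right by auto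
  ultimately show ?thesis unfolding left [symmetric] right [symmetric] by auto
qed

text \<open>Induction along the ordering: if \<open>v\<close> and \<open>w\<close> agree on the \<open>r - 1\<close> positions before \<open>i\<close>,
  the only two edges of the common cycle containing these vertices are the windows starting at
  \<open>i - r\<close> and \<open>i + 1 - r\<close>, and the second one forces \<open>v i = w i\<close>.\<close>
lemma permutes_eq_if_same_cycle_and_prefix:
  assumes v: "v permutes {..<n}" and w: "w permutes {..<n}"
    and cycle: "window n r v ` {..<n} = window n r w ` {..<n}"
    and prefix: "\<forall>j<r. v j = w j" and r: "2 \<le> r" "r < n"
  shows "v = w"
proof -
  have "\<forall>j<i. v j = w j" if "i \<le> n" for i
    using that
  proof (induction i)
    case (Suc i)
    have "v i = w i"
    proof (cases "i < r")
      case False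
      define S where "S = v ` {i + 1 - r..<i}"
      have S_w: "S = w ` {i + 1 - r..<i}" and left: "v (i - r) = w (i - r)"
        using Suc False r by (auto simp: S_def)
      have "{insert (v (i - r)) S, insert (v i) S} = {insert (v (i - r)) S, insert (w i) S}"
        using cycle_edges_containing_segment[OF permutes_inj[OF v] r(1), of i n]
          cycle_edges_containing_segment[OF permutes_inj[OF w] r(1), of i n] Suc False
        by (simp add: cycle S_w left flip: S_def)
      moreover have "v i \<notin> S" "v i \<noteq> v (i - r)"
        using permutes_inj[OF v] False r by (auto simp: S_def inj_eq)
      moreover have "w i \<notin> S"
        using permutes_inj[OF w] by (auto simp: S_w inj_eq)
      ultimately show ?thesis by (auto simp: doubleton_eq_iff)
    qed (use prefix in simp)
    then show ?case using Suc less_Suc_eq by auto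
  qed simp
  then have "v j = w j" for j
    using permutes_not_in[OF v, of j] permutes_not_in[OF w, of j] by (cases "j < n") auto
  then show ?thesis by (rule ext)
qed

lemma window_subset: "i < n \<Longrightarrow> bij_betw v {..<n} {..<n} \<Longrightarrow> window n r v i \<subseteq> {..<n}"
  using cyclic_interval_subset[of n r i]
  by (auto simp: window_eq_image_cyclic_interval bij_betw_def)

lemma ham_cycles_subset_Pow: "ham_cycles n r K \<subseteq> Pow (Pow {..<n})"
  unfolding ham_cycles_def using window_subset by blast

lemma finite_ham_cycles: "finite (ham_cycles n r K)"
  by (rule finite_subset[OF ham_cycles_subset_Pow]) simp

lemma cycle_in_ham_cycles:
  assumes "v permutes {..<n}" "\<forall>i<n. window n r v i \<in> K"
  shows "window n r v ` {..<n} \<in> ham_cycles n r K"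
  using assms permutes_imp_bij by (auto simp: ham_cycles_def)

lemma ham_cycle_subset_edges: "C \<in> ham_cycles n r E \<Longrightarrow> C \<subseteq> E"
  by (auto simp: ham_cycles_def)

lemma card_ham_cycle_le: "C \<in> ham_cycles n r E \<Longrightarrow> card C \<le> n"
  using card_image_le[of "{..<n}"] by (auto simp: ham_cycles_def)

lemma ham_cycles_restrict:
  "E \<subseteq> K \<Longrightarrow> ham_cycles n r E = {C \<in> ham_cycles n r K. C \<subseteq> E}"
  by (auto simp: ham_cycles_def)

lemma card_permutations_with_cycle_le:
  assumes Vs: "Vs \<subseteq> {v. v permutes {..<n} \<and> (\<forall>i<n. window n r v i \<in> K)}"
    and r: "2 \<le> r" "r < n"
  shows "card Vs \<le> card (ham_cycles n r K) * n ^ r"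
proof -
  let ?code = "\<lambda>v. (window n r v ` {..<n}, map v [0..<r])"
  let ?T = "ham_cycles n r K \<times> {xs. set xs \<subseteq> {..<n} \<and> length xs = r}"
  have "inj_on ?code Vs"
  proof (rule inj_onI)
    fix v w assume "v \<in> Vs" "w \<in> Vs" "?code v = ?code w"
    then show "v = w"
      using Vs r by (intro permutes_eq_if_same_cycle_and_prefix[of v n w r]) (auto simp: map_eq_conv)
  qed
  moreover have "?code ` Vs \<subseteq> ?T"
  proof
    fix c assume "c \<in> ?code ` Vs"
    then obtain v where "v \<in> Vs" "c = ?code v" by blast
    with Vs r show "c \<in> ?T"
      using permutes_in_image[of v "{..<n}"] by (auto intro: cycle_in_ham_cycles)
  qed
  moreover have "finite ?T" by (simp add: finite_ham_cycles finite_lists_length_eq)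
  ultimately have "card Vs \<le> card ?T" by (rule card_inj_on_le)
  also have "card ?T = card (ham_cycles n r K) * n ^ r"
    by (simp add: card_cartesian_product card_lists_length_eq)
  finally show ?thesis .
qed

lemma num_ham_le_H_max:
  assumes "rgraph n r E" "has_density n r p E"
  shows "num_ham n r E \<le> H_max r n p"
proof -
  have "{E. rgraph n r E \<and> has_density n r p E} \<subseteq> Pow (Pow {..<n})"
    by (auto simp: rgraph_def)
  then have "finite (num_ham n r ` {E. rgraph n r E \<and> has_density n r p E})"
    by (auto intro: finite_subset)
  moreover have "{num_ham n r E |E. rgraph n r E \<and> has_density n r p E}
      = num_ham n r ` {E. rgraph n r E \<and> has_density n r p E}"
    by blast
  ultimately show ?thesis unfolding H_max_def using assms by (auto intro: Max_ge)
qed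

section \<open>Averaging over colourings\<close>

lemma exists_ge_average:
  fixes g :: "'a \<Rightarrow> 'b::linordered_semidom"
  assumes "finite A" "A \<noteq> {}"
  shows "\<exists>a\<in>A. sum g A \<le> of_nat (card A) * g a"
proof -
  have "Max (g ` A) \<in> g ` A" using assms by simp
  then obtain a where a: "a \<in> A" "g a = Max (g ` A)" by (metis imageE)
  then have "sum g A \<le> of_nat (card A) * g a"
    using assms by (intro sum_bounded_above) simp
  with a show ?thesis by blast
qed

lemma card_colourings_with_word:
  assumes v: "v permutes {..<m}" and L: "L \<subseteq> {xs. set xs \<subseteq> B \<and> length xs = m}"
  shows "card {f \<in> {..<m} \<rightarrow>\<^sub>E B. map (f \<circ> v) [0..<m] \<in> L} = card L"
proof -
  let ?F = "{f \<in> {..<m} \<rightarrow>\<^sub>E B. map (f \<circ> v) [0..<m] \<in> L}"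
  let ?word = "\<lambda>f. map (f \<circ> v) [0..<m]"
  have v_lt: "v i < m \<longleftrightarrow> i < m" for i
    using permutes_in_image[OF v] by simp
  have inv_lt: "inv v x < m" if "x < m" for x
    using v_lt[of "inv v x"] permutes_inverses(1)[OF v] that by simp
  have inj: "inj_on ?word ?F"
  proof (rule inj_onI)
    fix f g assume f: "f \<in> ?F" and g: "g \<in> ?F" and fg: "?word f = ?word g"
    have "f x = g x" if "x < m" for x
      using arg_cong[OF fg, of "\<lambda>xs. xs ! inv v x"] inv_lt[OF that]
      by (simp add: permutes_inverses(1)[OF v])
    then show "f = g" using f g by (intro PiE_ext[of f "{..<m}" "\<lambda>_. B" g]) auto
  qed
  moreover have "?word ` ?F = L"
  proof (intro equalityI subsetI)
    fix xs assume xs: "xs \<in> L"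
    have xs_B: "set xs \<subseteq> B" and xs_m: "length xs = m" using xs L by auto
    define f where "f = restrict (\<lambda>x. xs ! inv v x) {..<m}"
    have "f \<in> {..<m} \<rightarrow>\<^sub>E B"
    proof -
      have "xs ! inv v x \<in> B" if "x < m" for x
        using xs_B xs_m nth_mem[of "inv v x" xs] inv_lt[OF that] by auto
      then show ?thesis by (auto simp: f_def)
    qed
    moreover have "?word f = xs"
      using xs_m v_lt by (intro nth_equalityI) (auto simp: f_def permutes_inverses(2)[OF v])
    ultimately show "xs \<in> ?word ` ?F" using xs by (intro image_eqI[of _ _ f]) auto
  qed auto
  ultimately show ?thesis using card_image[OF inj] by simp
qed

text \<open>Averaging over all \<open>k\<^sup>m\<close> colourings: each word of \<open>L\<close> is realised by exactly one
  colouring for each of the \<open>m!\<close> permutations.\<close>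
lemma exists_colouring_with_many_words:
  assumes "0 < k" and L: "L \<subseteq> {xs. set xs \<subseteq> {..<k} \<and> length xs = m}"
  shows "\<exists>f \<in> {..<m} \<rightarrow>\<^sub>E {..<k}.
           fact m * card L \<le> k ^ m * card {v. v permutes {..<m} \<and> map (f \<circ> v) [0..<m] \<in> L}"
proof -
  let ?F = "{..<m} \<rightarrow>\<^sub>E {..<k}"
  let ?P = "{v. v permutes {..<m}}"
  let ?good = "\<lambda>f v. map (f \<circ> v) [0..<m] \<in> L"
  have "(\<Sum>f\<in>?F. card {v \<in> ?P. ?good f v}) = (\<Sum>v\<in>?P. card {f \<in> ?F. ?good f v})"
    using sum.swap_restrict[of ?F ?P "\<lambda>_ _. 1::nat" ?good]
    by (simp add: finite_PiE finite_permutations)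
  also have "\<dots> = (\<Sum>v\<in>?P. card L)"
    using card_colourings_with_word[OF _ L] by simp
  also have "\<dots> = fact m * card L"
    using card_permutations[of "{..<m}" m] by simp
  finally have "fact m * card L = (\<Sum>f\<in>?F. card {v \<in> ?P. ?good f v})" ..
  moreover obtain f where "f \<in> ?F" "(\<Sum>f\<in>?F. card {v \<in> ?P. ?good f v}) \<le> card ?F * card {v \<in> ?P. ?good f v}"
    using exists_ge_average[of ?F "\<lambda>f. card {v \<in> ?P. ?good f v}"] \<open>0 < k\<close>
    by (auto simp: finite_PiE PiE_eq_empty_iff)
  ultimately show ?thesis by (auto simp: card_PiE)
qed

section \<open>Maclaurin's inequality\<close>

definition esym :: "'a set \<Rightarrow> nat \<Rightarrow> ('a \<Rightarrow> real) \<Rightarrow> real" where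
  "esym I r a = (\<Sum>T | T \<subseteq> I \<and> card T = r. \<Prod>i\<in>T. a i)"

lemma esym_cong: "(\<And>i. i \<in> I \<Longrightarrow> a i = b i) \<Longrightarrow> esym I r a = esym I r b"
  unfolding esym_def by (intro sum.cong refl prod.cong) auto

lemma esym_nonneg: "(\<And>i. i \<in> I \<Longrightarrow> 0 \<le> a i) \<Longrightarrow> 0 \<le> esym I r a"
  unfolding esym_def by (intro sum_nonneg prod_nonneg) auto

lemma esym_const: "finite I \<Longrightarrow> esym I r (\<lambda>_. c) = real (card I choose r) * c ^ r"
  unfolding esym_def by (simp add: n_subsets)

lemma esym_insert:
  assumes "finite I" "i \<notin> I"
  shows "esym (insert i I) (Suc r) a = a i * esym I r a + esym I (Suc r) a"
proof -
  let ?T = "\<lambda>r. {T. T \<subseteq> I \<and> card T = r}"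
  have split: "{T. T \<subseteq> insert i I \<and> card T = Suc r} = ?T (Suc r) \<union> insert i ` ?T r"
  proof (intro equalityI subsetI)
    fix T assume T: "T \<in> {T. T \<subseteq> insert i I \<and> card T = Suc r}"
    then have "finite T" using assms(1) finite_subset by auto
    with T show "T \<in> ?T (Suc r) \<union> insert i ` ?T r"
      by (cases "i \<in> T") (auto intro!: image_eqI[of T _ "T - {i}"])
  qed (use assms finite_subset in \<open>auto simp: card_insert_if\<close>)
  have "inj_on (insert i) (?T r)" and "?T (Suc r) \<inter> insert i ` ?T r = {}"
    using assms(2) by (auto simp: inj_on_def)
  then have "esym (insert i I) (Suc r) a
      = esym I (Suc r) a + (\<Sum>T\<in>?T r. \<Prod>j\<in>insert i T. a j)"
    unfolding esym_def split using assms(1) by (simp add: sum.union_disjoint sum.reindex)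
  also have "(\<Sum>T\<in>?T r. \<Prod>j\<in>insert i T. a j) = a i * esym I r a"
    unfolding esym_def sum_distrib_left
    using assms by (intro sum.cong refl) (auto simp: finite_subset prod.insert_if)
  finally show ?thesis by simp
qed

lemma sum_fun_upd_pair:
  fixes a :: "'a \<Rightarrow> 'b::ab_group_add"
  assumes "finite I" "i \<in> I" "j \<in> I" "i \<noteq> j"
  shows "sum (a(i := c, j := d)) I = sum a I - a i - a j + c + d"
proof -
  have I: "I = insert i (insert j (I - {i, j}))" using assms by auto
  have "sum (a(i := c, j := d)) (I - {i, j}) = sum a (I - {i, j})" by (rule sum.cong) auto
  then show ?thesis using assms by (subst (1 2) I) (simp add: algebra_simps)
qed

lemma esym_le_fun_upd_pair:
  assumes "finite I" "i \<in> I" "j \<in> I" "i \<noteq> j" "2 \<le> r" "\<forall>x\<in>I. 0 \<le> a x"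
    and "a i * a j \<le> c * d" "a i + a j = c + d"
  shows "esym I r a \<le> esym I r (a(i := c, j := d))"
proof -
  obtain s where r: "r = Suc (Suc s)" using \<open>2 \<le> r\<close> by (metis add_2_eq_Suc le_Suc_ex)
  define J where "J = I - {i, j}"
  have I: "I = insert i (insert j J)" and J: "finite J" "i \<notin> J" "j \<notin> J"
    using assms by (auto simp: J_def)
  have expand: "esym I r b = b i * b j * esym J s b + (b i + b j) * esym J (Suc s) b + esym J r b" for b
    using J \<open>i \<noteq> j\<close> by (simp add: I r esym_insert algebra_simps)
  let ?a' = "a(i := c, j := d)"
  have "esym J t ?a' = esym J t a" for t by (rule esym_cong) (use J in auto)
  moreover have "?a' i = c" "?a' j = d" using \<open>i \<noteq> j\<close> by auto
  moreover have "0 \<le> esym J s a" using assms by (intro esym_nonneg) (auto simp: J_def)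
  ultimately show ?thesis
    using expand[of a] expand[of ?a'] assms(7,8) by (simp add: mult_right_mono)
qed

lemma exists_above_below_mean:
  fixes a :: "'a \<Rightarrow> real"
  assumes "finite I" "sum a I = real (card I) * \<mu>" "\<exists>x\<in>I. a x \<noteq> \<mu>"
  shows "\<exists>i\<in>I. \<exists>j\<in>I. a j < \<mu> \<and> \<mu> < a i"
proof -
  have "sum a I = sum (\<lambda>_. \<mu>) I" using assms(2) by simp
  then have "\<not> (\<forall>x\<in>I. a x \<le> \<mu>)" and "\<not> (\<forall>x\<in>I. \<mu> \<le> a x)"
    using assms sum_strict_mono_ex1[OF assms(1), of a "\<lambda>_. \<mu>"]
      sum_strict_mono_ex1[OF assms(1), of "\<lambda>_. \<mu>" a] by force+
  then show ?thesis by (meson not_le)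
qed

text \<open>By smoothing: replacing a pair of values on either side of the
  mean \<open>\<mu>\<close> by \<open>\<mu>\<close> and their remaining sum increases \<open>esym\<close> and fixes one more value.\<close>
lemma esym_le_binomial_mean_power:
  assumes I: "finite I" and "2 \<le> r" and a: "\<forall>i\<in>I. 0 \<le> a i"
  shows "esym I r a \<le> real (card I choose r) * (sum a I / card I) ^ r"
proof -
  define \<mu> where "\<mu> = sum a I / card I"
  have sum_a: "sum a I = real (card I) * \<mu>"
    using I by (cases "card I = 0") (auto simp: \<mu>_def)
  have "esym I r b \<le> real (card I choose r) * \<mu> ^ r"
    if "card {x\<in>I. b x \<noteq> \<mu>} = N" "\<forall>x\<in>I. 0 \<le> b x" "sum b I = sum a I" for N b
    using that
  proof (induction N arbitrary: b rule: less_induct)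
    case (less N)
    show ?case
    proof (cases "\<exists>x\<in>I. b x \<noteq> \<mu>")
      case False
      then show ?thesis using esym_cong[of I b "\<lambda>_. \<mu>"] esym_const[OF I] by simp
    next
      case True
      then obtain i j where ij: "i \<in> I" "j \<in> I" "b j < \<mu>" "\<mu> < b i"
        using exists_above_below_mean[OF I, of b \<mu>] less.prems sum_a by auto
      define b' where "b' = b(i := \<mu>, j := b i + b j - \<mu>)"
      have "0 \<le> (b i - \<mu>) * (\<mu> - b j)" using ij by simp
      then have "esym I r b \<le> esym I r b'"
        unfolding b'_def using ij less.prems \<open>2 \<le> r\<close> I
        by (intro esym_le_fun_upd_pair) (auto simp: algebra_simps)
      also have "\<dots> \<le> real (card I choose r) * \<mu> ^ r"
      proof (rule less.IH[OF _ refl])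
        have b': "b' i = \<mu>" "b' j = b i + b j - \<mu>" "\<And>x. x \<noteq> i \<Longrightarrow> x \<noteq> j \<Longrightarrow> b' x = b x"
          using ij by (auto simp: b'_def)
        have "{x\<in>I. b' x \<noteq> \<mu>} \<subseteq> {x\<in>I. b x \<noteq> \<mu>} - {i}"
          using ij b' by force
        then have "{x\<in>I. b' x \<noteq> \<mu>} \<subset> {x\<in>I. b x \<noteq> \<mu>}" using ij by auto
        then show "card {x\<in>I. b' x \<noteq> \<mu>} < N"
          using I less.prems(1) by (auto intro: psubset_card_mono)
        show "\<forall>x\<in>I. 0 \<le> b' x"
          using ij b' less.prems(2) by (metis add_increasing2 diff_ge_0_iff_ge less_eq_real_def order_trans)
        show "sum b' I = sum a I"
          using ij less.prems(3) I unfolding b'_def by (subst sum_fun_upd_pair) auto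
      qed
      finally show ?thesis .
    qed
  qed
  then show ?thesis using a by (simp add: \<mu>_def)
qed

section \<open>The colour graph\<close>

lemma locally_distinct_inj_on:
  assumes "locally_distinct r xs" "i + r \<le> length xs"
  shows "inj_on ((!) xs) {i..<i + r}"
proof (rule inj_onI)
  fix a b assume "a \<in> {i..<i + r}" "b \<in> {i..<i + r}" "xs ! a = xs ! b"
  with assms show "a = b"
    unfolding locally_distinct_def by (cases a b rule: linorder_cases) force+
qed

definition colour_graph :: "nat \<Rightarrow> nat \<Rightarrow> (nat \<Rightarrow> nat) \<Rightarrow> nat set set" where
  "colour_graph n r f = {e. e \<subseteq> {..<n} \<and> card e = r \<and> (n - 1 \<in> e \<or> inj_on f e)}"

lemma window_in_colour_graph:
  assumes v: "v permutes {..<n - 1}" and good: "locally_distinct r (map (f \<circ> v) [0..<n - 1])"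
    and "r < n" "i < n"
  shows "window n r v i \<in> colour_graph n r f"
proof -
  have v_n: "v permutes {..<n}" by (rule permutes_subset[OF v]) auto
  have "n - 1 \<in> window n r v i \<or> inj_on f (window n r v i)"
  proof (cases "i + r \<le> n - 1")
    case True
    then have "inj_on (f \<circ> v) {i..<i + r}"
      using locally_distinct_inj_on[OF good, of i] by (simp add: inj_on_def)
    then show ?thesis
      using True by (simp add: window_eq_image_cyclic_interval cyclic_interval_eq_atLeastLessThan
          inj_on_imageI)
  next
    case False
    then have "n - 1 \<in> cyclic_interval n r i"
      using \<open>i < n\<close> unfolding cyclic_interval_def by (intro CollectI exI[of _ "n - 1 - i"]) auto
    moreover have "v (n - 1) = n - 1" using permutes_not_in[OF v] by simp
    ultimately show ?thesis by (metis image_eqI window_eq_image_cyclic_interval)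
  qed
  moreover have "window n r v i \<subseteq> {..<n}" "card (window n r v i) = r"
    using assms window_subset[OF _ permutes_imp_bij[OF v_n]] card_cyclic_interval[of r n i]
      permutes_inj_on[OF v_n]
    by (auto simp: window_eq_image_cyclic_interval card_image)
  ultimately show ?thesis by (simp add: colour_graph_def)
qed

lemma card_rainbow_subsets_le:
  assumes A: "finite A" and C: "finite C" "f ` A \<subseteq> C"
  shows "real (card {e. e \<subseteq> A \<and> card e = r \<and> inj_on f e})
           \<le> esym C r (\<lambda>c. real (card {x\<in>A. f x = c}))"
proof -
  define B where "B c = {x\<in>A. f x = c}" for c
  define Ts where "Ts = {T. T \<subseteq> C \<and> card T = r}"
  have fin: "finite Ts" "\<And>T. T \<in> Ts \<Longrightarrow> finite (PiE T B)"
    using A C by (auto simp: Ts_def B_def intro!: finite_PiE intro: finite_subset)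
  have "{e. e \<subseteq> A \<and> card e = r \<and> inj_on f e} \<subseteq> (\<Union>T\<in>Ts. (\<lambda>g. g ` T) ` PiE T B)"
  proof
    fix e assume e: "e \<in> {e. e \<subseteq> A \<and> card e = r \<and> inj_on f e}"
    let ?g = "restrict (inv_into e f) (f ` e)"
    have "?g \<in> PiE (f ` e) B"
      using e by (auto simp: B_def inv_into_into f_inv_into_f)
    moreover have "?g ` f ` e = e" using e by (simp add: inv_into_image_cancel)
    moreover have "f ` e \<in> Ts" using e C by (auto simp: Ts_def card_image)
    ultimately show "e \<in> (\<Union>T\<in>Ts. (\<lambda>g. g ` T) ` PiE T B)" by blast
  qed
  then have "card {e. e \<subseteq> A \<and> card e = r \<and> inj_on f e} \<le> card (\<Union>T\<in>Ts. (\<lambda>g. g ` T) ` PiE T B)"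
    using fin by (intro card_mono) auto
  also have "\<dots> \<le> (\<Sum>T\<in>Ts. card ((\<lambda>g. g ` T) ` PiE T B))"
    using fin by (intro card_UN_le)
  also have "\<dots> \<le> (\<Sum>T\<in>Ts. card (PiE T B))"
    by (intro sum_mono card_image_le fin)
  also have "\<dots> = (\<Sum>T\<in>Ts. \<Prod>c\<in>T. card (B c))"
    using C by (intro sum.cong refl card_PiE) (auto simp: Ts_def intro: finite_subset)
  also have "\<dots> = esym C r (\<lambda>c. real (card (B c)))"
    by (simp add: esym_def Ts_def of_nat_sum of_nat_prod)
  finally show ?thesis by (simp add: B_def)
qed

lemma colour_graph_subset:
  "colour_graph n r f \<subseteq> insert (n - 1) ` {T. T \<subseteq> {..<n - 1} \<and> card T = r - 1}
     \<union> {e. e \<subseteq> {..<n - 1} \<and> card e = r \<and> inj_on f e}"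
proof
  fix e assume e: "e \<in> colour_graph n r f"
  then have e_n: "e \<subseteq> {..<n}" "card e = r" and "finite e"
    by (auto simp: colour_graph_def intro: finite_subset)
  show "e \<in> insert (n - 1) ` {T. T \<subseteq> {..<n - 1} \<and> card T = r - 1}
      \<union> {e. e \<subseteq> {..<n - 1} \<and> card e = r \<and> inj_on f e}"
  proof (cases "n - 1 \<in> e")
    case True
    then have "e = insert (n - 1) (e - {n - 1})" "card (e - {n - 1}) = r - 1"
      using e_n \<open>finite e\<close> by auto
    moreover have "e - {n - 1} \<subseteq> {..<n - 1}" using e_n by auto
    ultimately show ?thesis by blast
  next
    case False
    have "e \<subseteq> {..<n - 1}"
    proof
      fix x assume "x \<in> e"
      then show "x \<in> {..<n - 1}" using e_n False by (cases "x = n - 1") auto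
    qed
    with e False show ?thesis by (simp add: colour_graph_def)
  qed
qed

lemma card_colour_graph_le:
  assumes f: "f ` {..<n - 1} \<subseteq> {..<k}" and "2 \<le> r"
  shows "real (card (colour_graph n r f)) \<le> real n ^ (r - 1) + real (k choose r) * (real n / k) ^ r"
proof -
  define A1 where "A1 = insert (n - 1) ` {T. T \<subseteq> {..<n - 1} \<and> card T = r - 1}"
  define A2 where "A2 = {e. e \<subseteq> {..<n - 1} \<and> card e = r \<and> inj_on f e}"
  have "colour_graph n r f \<subseteq> A1 \<union> A2" unfolding A1_def A2_def by (rule colour_graph_subset)
  moreover have "finite A1" "finite A2"
    by (auto simp: A1_def A2_def intro: finite_subset[of _ "Pow {..<n - 1}"])
  ultimately have "card (colour_graph n r f) \<le> card (A1 \<union> A2)" by (intro card_mono) auto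
  also have "\<dots> \<le> card A1 + card A2" by (rule card_Un_le)
  finally have "real (card (colour_graph n r f)) \<le> real (card A1) + real (card A2)"
    by (metis of_nat_add of_nat_le_iff)
  moreover have "card A1 \<le> n ^ (r - 1)"
  proof -
    have "card A1 \<le> card {T. T \<subseteq> {..<n - 1} \<and> card T = r - 1}"
      unfolding A1_def by (rule card_image_le) simp
    also have "\<dots> = (n - 1) choose (r - 1)" by (simp add: n_subsets)
    also have "\<dots> \<le> (n - 1) ^ (r - 1)"
      by (cases "r - 1 \<le> n - 1") (simp_all add: binomial_le_pow binomial_eq_0)
    also have "\<dots> \<le> n ^ (r - 1)" by (simp add: power_mono)
    finally show ?thesis .
  qed
  then have "real (card A1) \<le> real n ^ (r - 1)" by (metis of_nat_le_iff of_nat_power)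
  moreover have "real (card A2) \<le> real (k choose r) * (real n / k) ^ r"
  proof -
    have "(\<Sum>c<k. real (card {x\<in>{..<n - 1}. f x = c})) = real (n - 1)"
      using sum.group[of "{..<n - 1}" "{..<k}" f "\<lambda>_. 1::real"] f by simp
    then have "esym {..<k} r (\<lambda>c. real (card {x\<in>{..<n - 1}. f x = c}))
        \<le> real (k choose r) * (real (n - 1) / k) ^ r"
      using esym_le_binomial_mean_power[of "{..<k}" r "\<lambda>c. real (card {x\<in>{..<n - 1}. f x = c})"]
        \<open>2 \<le> r\<close> by simp
    also have "\<dots> \<le> real (k choose r) * (real n / k) ^ r"
      by (intro mult_left_mono power_mono divide_right_mono) auto
    finally show ?thesis
      using card_rainbow_subsets_le[of "{..<n - 1}" "{..<k}" f r] f unfolding A2_def by simp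
  qed
  ultimately show ?thesis by linarith
qed

section \<open>Graphs with a prescribed number of edges\<close>

lemma card_supersets_with_card:
  assumes K: "finite K" and "X \<subseteq> K" "card X \<le> m"
  shows "card {E. E \<subseteq> K \<and> card E = m \<and> X \<subseteq> E} = (card K - card X) choose (m - card X)"
proof -
  have X: "finite X" using assms finite_subset by blast
  let ?D = "{B. B \<subseteq> K - X \<and> card B = m - card X}"
  have inj: "inj_on (\<lambda>B. B \<union> X) ?D" by (auto simp: inj_on_def)
  moreover have "(\<lambda>B. B \<union> X) ` ?D = {E. E \<subseteq> K \<and> card E = m \<and> X \<subseteq> E}"
  proof (intro equalityI subsetI)
    fix E assume "E \<in> (\<lambda>B. B \<union> X) ` ?D"
    then obtain B where B: "B \<subseteq> K - X" "card B = m - card X" and E: "E = B \<union> X" by blast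
    then have "finite B" "B \<inter> X = {}" using K finite_subset by auto
    then have "card E = m" using E B X \<open>card X \<le> m\<close> by (simp add: card_Un_disjoint)
    then show "E \<in> {E. E \<subseteq> K \<and> card E = m \<and> X \<subseteq> E}" using B E \<open>X \<subseteq> K\<close> by blast
  next
    fix E assume E: "E \<in> {E. E \<subseteq> K \<and> card E = m \<and> X \<subseteq> E}"
    then have "E - X \<in> ?D" by (auto simp: card_Diff_subset[OF X])
    moreover have "E = (E - X) \<union> X" using E by blast
    ultimately show "E \<in> (\<lambda>B. B \<union> X) ` ?D" by blast
  qed
  ultimately have "card {E. E \<subseteq> K \<and> card E = m \<and> X \<subseteq> E} = card ?D"
    using card_image[OF inj] by simp
  also have "\<dots> = card (K - X) choose (m - card X)" using K by (simp add: n_subsets)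
  finally show ?thesis using assms X by (simp add: card_Diff_subset)
qed

lemma binomial_diff_mono:
  assumes "c \<le> n" "n \<le> m" "m \<le> N"
  shows "(N - n) choose (m - n) \<le> (N - c) choose (m - c)"
proof -
  have "(N - n) choose (m - n) = (N - n) choose (N - m)"
    using assms by (subst binomial_symmetric) (auto intro: arg_cong2[where f = binomial])
  also have "\<dots> \<le> (N - c) choose (N - m)" by (rule binomial_right_mono) (use assms in simp)
  also have "\<dots> = (N - c) choose (m - c)"
    using assms by (subst binomial_symmetric) (auto intro: arg_cong2[where f = binomial])
  finally show ?thesis .
qed

lemma binomial_ratio_ge:
  "n \<le> m \<Longrightarrow> m \<le> N \<Longrightarrow> ((real m - real n) / real N) ^ n * real (N choose m) \<le> real ((N - n) choose (m - n))"
proof (induction n arbitrary: N m)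
  case (Suc n)
  obtain m' N' where mN: "m = Suc m'" "N = Suc N'" using Suc.prems by (metis Suc_le_D le_trans)
  define x where "x = real m - real n - 1"
  have x: "0 \<le> x" "x \<le> real m" using Suc.prems by (auto simp: x_def)
  have "real m * real (N choose m) = real N * real (N' choose m')"
    using binomial_absorption[of m' N] mN by (metis diff_Suc_1 of_nat_mult)
  moreover have "0 < real m" "0 < real N" using mN by auto
  ultimately have absorb: "x / real N * real (N choose m) = x / real m * real (N' choose m')"
    by (simp add: field_simps)
  have "((real m - real (Suc n)) / real N) ^ Suc n * real (N choose m)
      = (x / real N) ^ n * (x / real N * real (N choose m))"
    by (simp only: x_def of_nat_Suc diff_diff_eq power_Suc ac_simps)
  also have "\<dots> = (x / real m) * ((x / real N) ^ n * real (N' choose m'))"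
    by (subst absorb) (simp only: ac_simps)
  also have "\<dots> \<le> (x / real N) ^ n * real (N' choose m')"
    using x by (intro mult_left_le_one_le) (auto simp: divide_le_eq_1)
  also have "\<dots> \<le> (x / real N') ^ n * real (N' choose m')"
  proof (cases "n = 0")
    case False
    then have "0 < N'" using Suc.prems mN by auto
    then show ?thesis using x mN by (intro mult_right_mono power_mono divide_left_mono) auto
  qed simp
  also have "\<dots> \<le> real ((N' - n) choose (m' - n))"
    using Suc.IH[of m' N'] Suc.prems mN by (simp add: x_def)
  finally show ?case using mN by simp
qed simp

text \<open>Averaging over all \<open>m\<close>-edge subgraphs of \<open>K\<close>: a cycle of \<open>K\<close> has at most \<open>n\<close> edges,
  so it survives in at least \<open>(card K - n) choose (m - n)\<close> of them.\<close>
lemma exists_subgraph_with_many_ham_cycles: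
  assumes K: "finite K" and "m \<le> card K" "n \<le> m"
  shows "\<exists>E. E \<subseteq> K \<and> card E = m \<and>
     card (ham_cycles n r K) * ((card K - n) choose (m - n)) \<le> card (ham_cycles n r E) * (card K choose m)"
proof -
  let ?S = "{E. E \<subseteq> K \<and> card E = m}"
  let ?H = "ham_cycles n r K"
  have S: "finite ?S" "?S \<noteq> {}" "card ?S = card K choose m"
    using K obtain_subset_with_card_n[OF \<open>m \<le> card K\<close>] by (auto simp: n_subsets)
  have "card ?H * ((card K - n) choose (m - n)) = (\<Sum>C\<in>?H. (card K - n) choose (m - n))"
    by simp
  also have "\<dots> \<le> (\<Sum>C\<in>?H. card {E \<in> ?S. C \<subseteq> E})"
  proof (rule sum_mono)
    fix C assume C: "C \<in> ?H"
    then have "card {E \<in> ?S. C \<subseteq> E} = (card K - card C) choose (m - card C)"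
      using card_supersets_with_card[OF K ham_cycle_subset_edges[OF C], of m]
        card_ham_cycle_le[OF C] \<open>n \<le> m\<close> by (simp add: conj_assoc)
    then show "(card K - n) choose (m - n) \<le> card {E \<in> ?S. C \<subseteq> E}"
      using binomial_diff_mono[OF card_ham_cycle_le[OF C] \<open>n \<le> m\<close> \<open>m \<le> card K\<close>] by simp
  qed
  also have "\<dots> = (\<Sum>E\<in>?S. card {C \<in> ?H. C \<subseteq> E})"
    using sum.swap_restrict[OF finite_ham_cycles S(1), of "\<lambda>_ _. 1::nat" "\<lambda>C E. C \<subseteq> E"] by simp
  also have "\<dots> = (\<Sum>E\<in>?S. card (ham_cycles n r E))"
    by (intro sum.cong refl) (auto simp: ham_cycles_restrict)
  finally have "card ?H * ((card K - n) choose (m - n)) \<le> (\<Sum>E\<in>?S. card (ham_cycles n r E))" .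
  moreover obtain E where "E \<in> ?S" "(\<Sum>E\<in>?S. card (ham_cycles n r E)) \<le> card ?S * card (ham_cycles n r E)"
    using exists_ge_average[OF S(1,2), of "\<lambda>E. card (ham_cycles n r E)"] by auto
  ultimately show ?thesis using S(3) by (auto simp: mult.commute intro: order_trans)
qed

lemma exists_superset_with_card:
  assumes "finite U" "K \<subseteq> U" "card K \<le> m" "m \<le> card U"
  shows "\<exists>E. K \<subseteq> E \<and> E \<subseteq> U \<and> card E = m"
proof -
  have "finite K" using assms finite_subset by blast
  have "m - card K \<le> card (U - K)" using assms \<open>finite K\<close> by (simp add: card_Diff_subset)
  then obtain T where T: "T \<subseteq> U - K" "card T = m - card K" by (meson obtain_subset_with_card_n)
  then have "finite T" using assms finite_subset by blast
  then have "card (K \<union> T) = m" using T assms \<open>finite K\<close> by (subst card_Un_disjoint) auto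
  then show ?thesis using T assms by (intro exI[of _ "K \<union> T"]) auto
qed

lemma exists_graph_with_many_ham_cycles:
  assumes K: "K \<subseteq> {e. e \<subseteq> {..<n} \<and> card e = r}" and m: "n \<le> m" "m \<le> n choose r"
  shows "\<exists>E. rgraph n r E \<and> card E = m \<and>
    real (card (ham_cycles n r K)) * (min 1 ((real m - real n) / real (card K))) ^ n \<le> real (num_ham n r E)"
proof -
  let ?U = "{e. e \<subseteq> {..<n} \<and> card e = r}"
  let ?HK = "real (card (ham_cycles n r K))"
  let ?\<rho> = "(real m - real n) / real (card K)"
  have U: "finite ?U" "card ?U = n choose r" by (auto simp: n_subsets finite_subset[of _ "Pow {..<n}"])
  then have "finite K" using K finite_subset by blast
  have "0 \<le> min 1 ?\<rho>" using m by simp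
  consider "m \<le> card K" | "card K < m" by linarith
  then obtain E where E: "E \<subseteq> ?U" "card E = m" "?HK * (min 1 ?\<rho>) ^ n \<le> real (card (ham_cycles n r E))"
  proof cases
    case 1
    then obtain E where E: "E \<subseteq> K" "card E = m" and many:
      "card (ham_cycles n r K) * ((card K - n) choose (m - n)) \<le> card (ham_cycles n r E) * (card K choose m)"
      using exists_subgraph_with_many_ham_cycles[OF \<open>finite K\<close> _ m(1)] by blast
    have "?HK * ?\<rho> ^ n * real (card K choose m) \<le> ?HK * real ((card K - n) choose (m - n))"
      using binomial_ratio_ge[OF m(1) 1] by (simp add: mult.assoc mult_left_mono)
    also have "\<dots> \<le> real (card (ham_cycles n r E)) * real (card K choose m)"
      using many by (metis of_nat_le_iff of_nat_mult)
    finally have "?HK * ?\<rho> ^ n \<le> real (card (ham_cycles n r E))"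
      using 1 by (simp add: mult_le_cancel_right)
    moreover have "?HK * (min 1 ?\<rho>) ^ n \<le> ?HK * ?\<rho> ^ n"
      using \<open>0 \<le> min 1 ?\<rho>\<close> by (intro mult_left_mono power_mono) auto
    ultimately have "?HK * (min 1 ?\<rho>) ^ n \<le> real (card (ham_cycles n r E))" by linarith
    then show ?thesis using that[of E] E K by blast
  next
    case 2
    then have "card K \<le> m" by simp
    then obtain E where "K \<subseteq> E" "E \<subseteq> ?U" "card E = m"
      using exists_superset_with_card[OF U(1) K] m U(2) by auto
    moreover have "card (ham_cycles n r K) \<le> card (ham_cycles n r E)"
      using ham_cycles_restrict[OF \<open>K \<subseteq> E\<close>] by (intro card_mono finite_ham_cycles) auto
    moreover have "?HK * (min 1 ?\<rho>) ^ n \<le> ?HK"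
      using \<open>0 \<le> min 1 ?\<rho>\<close> by (simp add: mult_left_le power_le_one)
    ultimately show ?thesis using that[of E] by force
  qed
  then show ?thesis unfolding num_ham_def rgraph_def by blast
qed

section \<open>The lower bound for fixed n\<close>

lemma exists_colour_graph_with_many_ham_cycles:
  assumes r: "2 \<le> r" "r < k" "r < n"
  shows "\<exists>f. f ` {..<n - 1} \<subseteq> {..<k} \<and>
     fact (n - 1) * (k - r + 1) ^ (n - 1) \<le> k ^ (n - 1) * (card (ham_cycles n r (colour_graph n r f)) * n ^ r)"
proof -
  define L where "L = locally_distinct_words r k (n - 1)"
  have L: "L \<subseteq> {xs. set xs \<subseteq> {..<k} \<and> length xs = n - 1}"
    by (auto simp: L_def locally_distinct_words_def)
  obtain f where f: "f \<in> {..<n - 1} \<rightarrow>\<^sub>E {..<k}"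
    and many: "fact (n - 1) * card L \<le> k ^ (n - 1) * card {v. v permutes {..<n - 1} \<and> map (f \<circ> v) [0..<n - 1] \<in> L}"
    using exists_colouring_with_many_words[OF _ L] r by auto
  let ?Vs = "{v. v permutes {..<n - 1} \<and> map (f \<circ> v) [0..<n - 1] \<in> L}"
  have "?Vs \<subseteq> {v. v permutes {..<n} \<and> (\<forall>i<n. window n r v i \<in> colour_graph n r f)}"
    using r by (auto simp: L_def locally_distinct_words_def intro: window_in_colour_graph
        permutes_subset[of _ "{..<n - 1}" "{..<n}"])
  then have "card ?Vs \<le> card (ham_cycles n r (colour_graph n r f)) * n ^ r"
    using r by (intro card_permutations_with_cycle_le) auto
  moreover have "(k - r + 1) ^ (n - 1) \<le> card L"
    using card_locally_distinct_words[of k r "n - 1"] r by (simp add: L_def Suc_diff_le)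
  ultimately have "fact (n - 1) * (k - r + 1) ^ (n - 1) \<le> k ^ (n - 1) * (card (ham_cycles n r (colour_graph n r f)) * n ^ r)"
    using many by (meson le_trans mult_le_mono2)
  moreover have "f ` {..<n - 1} \<subseteq> {..<k}" using f by auto
  ultimately show ?thesis by blast
qed

lemma exists_sparse_graph_with_many_ham_cycles:
  assumes r: "2 \<le> r" "r < k" "r < n"
  shows "\<exists>K. K \<subseteq> {e. e \<subseteq> {..<n} \<and> card e = r} \<and> 0 < card K \<and>
     real (card K) \<le> real n ^ (r - 1) + real (k choose r) * (real n / k) ^ r \<and>
     fact (n - 1) * real (k - r + 1) ^ (n - 1) / (real k ^ (n - 1) * real n ^ r) \<le> real (card (ham_cycles n r K))"
proof -
  obtain f where f: "f ` {..<n - 1} \<subseteq> {..<k}" and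
    many: "fact (n - 1) * (k - r + 1) ^ (n - 1) \<le> k ^ (n - 1) * (card (ham_cycles n r (colour_graph n r f)) * n ^ r)"
    using exists_colour_graph_with_many_ham_cycles[OF r] by blast
  define K where "K = colour_graph n r f"
  have K: "K \<subseteq> {e. e \<subseteq> {..<n} \<and> card e = r}" by (auto simp: K_def colour_graph_def)
  have "0 < fact (n - 1) * (k - r + 1) ^ (n - 1)" by simp
  then have "0 < k ^ (n - 1) * (card (ham_cycles n r K) * n ^ r)"
    using many unfolding K_def by (rule less_le_trans)
  then have "0 < card (ham_cycles n r K)" by simp
  then obtain C where C: "C \<in> ham_cycles n r K" by (metis card.empty less_irrefl ex_in_conv)
  then have "C \<noteq> {}" using r by (auto simp: ham_cycles_def)
  moreover have "finite K"
    unfolding K_def colour_graph_def by (rule finite_subset[of _ "Pow {..<n}"]) auto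
  moreover have "C \<subseteq> K" using ham_cycle_subset_edges[OF C] .
  ultimately have "0 < card K" by (metis card_gt_0_iff subset_empty)
  have "real (fact (n - 1) * (k - r + 1) ^ (n - 1)) \<le> real (k ^ (n - 1) * (card (ham_cycles n r K) * n ^ r))"
    using many unfolding K_def by (simp only: of_nat_le_iff)
  then have "fact (n - 1) * real (k - r + 1) ^ (n - 1) \<le> (real k ^ (n - 1) * real n ^ r) * real (card (ham_cycles n r K))"
    by (simp add: algebra_simps)
  moreover have "0 < real k ^ (n - 1) * real n ^ r" using r by simp
  ultimately have "fact (n - 1) * real (k - r + 1) ^ (n - 1) / (real k ^ (n - 1) * real n ^ r)
      \<le> real (card (ham_cycles n r K))"
    by (simp add: divide_le_eq mult.commute)
  moreover have "real (card K) \<le> real n ^ (r - 1) + real (k choose r) * (real n / k) ^ r"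
    unfolding K_def using f r(1) by (rule card_colour_graph_le)
  ultimately show ?thesis using K \<open>0 < card K\<close> by blast
qed

lemma H_max_ge:
  assumes r: "2 \<le> r" "r < k" "r < n" and m: "n \<le> m" "m \<le> n choose r"
    and density: "real m = p * real (n choose r)"
  shows "fact (n - 1) * real (k - r + 1) ^ (n - 1) / (real k ^ (n - 1) * real n ^ r)
           * (min 1 ((real m - real n) / (real n ^ (r - 1) + real (k choose r) * (real n / k) ^ r))) ^ n
         \<le> real (H_max r n p)"
proof -
  define A where "A = fact (n - 1) * real (k - r + 1) ^ (n - 1) / (real k ^ (n - 1) * real n ^ r)"
  define N where "N = real n ^ (r - 1) + real (k choose r) * (real n / k) ^ r"
  obtain K where K: "K \<subseteq> {e. e \<subseteq> {..<n} \<and> card e = r}" "0 < card K" "real (card K) \<le> N"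
    and many: "A \<le> real (card (ham_cycles n r K))"
    using exists_sparse_graph_with_many_ham_cycles[OF r] unfolding A_def N_def by blast
  obtain E where E: "rgraph n r E" "card E = m"
    "real (card (ham_cycles n r K)) * (min 1 ((real m - real n) / real (card K))) ^ n \<le> real (num_ham n r E)"
    using exists_graph_with_many_ham_cycles[OF K(1) m] by blast
  have "(real m - real n) / N \<le> (real m - real n) / real (card K)"
    using K m by (intro divide_left_mono) auto
  then have "min 1 ((real m - real n) / N) \<le> min 1 ((real m - real n) / real (card K))"
    by (auto simp: min_def)
  moreover have "0 \<le> min 1 ((real m - real n) / N)" using m by (simp add: N_def)
  moreover have "0 \<le> A" by (simp add: A_def)
  ultimately have "A * (min 1 ((real m - real n) / N)) ^ n
      \<le> real (card (ham_cycles n r K)) * (min 1 ((real m - real n) / real (card K))) ^ n"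
    using many by (intro mult_mono power_mono) auto
  also have "\<dots> \<le> real (num_ham n r E)" by (rule E(3))
  also have "\<dots> \<le> real (H_max r n p)"
    using num_ham_le_H_max E(1,2) density by (simp add: has_density_def)
  finally show ?thesis unfolding A_def N_def .
qed

lemma H_max_div_E_exp_ge:
  assumes p: "0 < p" and r: "2 \<le> r" "r < k" "r < n" and m: "n \<le> m" "m \<le> n choose r"
    and density: "real m = p * real (n choose r)"
  defines "\<beta> \<equiv> real (k - r + 1)"
  shows "2 * real k / \<beta> / real n ^ r
           * (\<beta> * min 1 ((real m - real n) / (real n ^ (r - 1) + real (k choose r) * (real n / k) ^ r)) / (real k * p)) ^ n
         \<le> real (H_max r n p) / E_exp n p"
proof -
  let ?\<mu> = "min 1 ((real m - real n) / (real n ^ (r - 1) + real (k choose r) * (real n / k) ^ r))"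
  obtain n' where n: "n = Suc n'" using r by (cases n) auto
  have "2 * real k / \<beta> / real n ^ r * (\<beta> * ?\<mu> / (real k * p)) ^ n
      = fact (n - 1) * \<beta> ^ (n - 1) / (real k ^ (n - 1) * real n ^ r) * ?\<mu> ^ n / E_exp n p"
  proof -
    have "2 * K / B / P * (B * \<mu> / (K * p)) ^ Suc n'
        = fact n' * B ^ n' / (K ^ n' * P) * \<mu> ^ Suc n' / (p ^ Suc n' * fact n' / 2)"
      if "K \<noteq> 0" "B \<noteq> 0" "P \<noteq> 0" for K B P \<mu> :: real
      using that p by (simp add: power_divide power_mult_distrib field_simps)
    moreover have "real k \<noteq> 0" "\<beta> \<noteq> 0" "real n ^ r \<noteq> 0" using r by (auto simp: \<beta>_def)
    ultimately show ?thesis by (simp add: n E_exp_def)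
  qed
  also have "\<dots> \<le> real (H_max r n p) / E_exp n p"
    using H_max_ge[OF r m density] p by (intro divide_right_mono) (auto simp: \<beta>_def E_exp_def)
  finally show ?thesis .
qed

section \<open>Asymptotics\<close>

lemma binomial_ge_power_div_fact:
  assumes "r \<le> n"
  shows "(real n - real r) ^ r / fact r \<le> real (n choose r)"
proof -
  have "(real n - real r) ^ r / fact r = (\<Prod>i = 0..<r. (real n - real r) / real (r - i))"
    by (simp add: prod_dividef fact_prod_rev[of r] of_nat_prod)
  also have "\<dots> \<le> (\<Prod>i = 0..<r. real (n - i) / real (r - i))"
    using assms by (intro prod_mono) (auto simp: divide_right_mono of_nat_diff)
  also have "\<dots> = real (n choose r)" by (rule binomial_altdef_of_nat[OF assms, symmetric])
  finally show ?thesis .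
qed

text \<open>A lower bound for \<open>(p * (n choose r) - n) / (n ^ (r - 1) + (k choose r) * (n / k) ^ r)\<close>
  that depends on \<open>n\<close> only through elementary functions, so that its limit is easy to compute.\<close>
definition density_ratio_bound :: "real \<Rightarrow> nat \<Rightarrow> nat \<Rightarrow> nat \<Rightarrow> real" where
  "density_ratio_bound p r k n =
     (p * (1 - real r / n) ^ r / fact r - (1 / n) ^ (r - 1)) / (1 / n + real (k choose r) / k ^ r)"

lemma density_ratio_ge:
  assumes "0 \<le> p" "1 \<le> r" "r \<le> n"
  shows "density_ratio_bound p r k n
         \<le> (p * real (n choose r) - real n) / (real n ^ (r - 1) + real (k choose r) * (real n / k) ^ r)"
proof -
  let ?u = "p * (1 - real r / n) ^ r / fact r - (1 / n) ^ (r - 1)"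
  let ?N = "real n ^ (r - 1) + real (k choose r) * (real n / k) ^ r"
  have n: "0 < real n" using assms by simp
  have pow: "real n ^ r = real n * real n ^ (r - 1)" using \<open>1 \<le> r\<close> by (simp flip: power_Suc)
  have N: "?N = real n ^ r * (1 / n + real (k choose r) / k ^ r)"
    using n by (simp add: pow power_divide field_simps)
  have "0 < ?N" using n by (intro add_pos_nonneg) auto
  have "real n ^ r * ?u = p * ((real n - real r) ^ r / fact r) - real n"
    using n by (simp add: pow field_simps power_one_over flip: power_divide) (simp add: pow field_simps)
  also have "\<dots> \<le> p * real (n choose r) - real n"
    using mult_left_mono[OF binomial_ge_power_div_fact[OF \<open>r \<le> n\<close>] \<open>0 \<le> p\<close>] by simp
  finally have "real n ^ r * ?u / ?N \<le> (p * real (n choose r) - real n) / ?N"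
    using \<open>0 < ?N\<close> by (simp add: divide_right_mono)
  moreover have "real n ^ r * ?u / ?N = density_ratio_bound p r k n"
    unfolding N density_ratio_bound_def using n by simp
  ultimately show ?thesis by simp
qed

lemma tendsto_density_ratio_bound:
  assumes "2 \<le> r" "r \<le> k"
  shows "(\<lambda>n. density_ratio_bound p r k n) \<longlonglongrightarrow> p / (fact r * (real (k choose r) / k ^ r))"
proof -
  have "(\<lambda>n. density_ratio_bound p r k n)
      \<longlonglongrightarrow> (p * (1 - 0) ^ r / fact r - 0 ^ (r - 1)) / (0 + real (k choose r) / k ^ r)"
    unfolding density_ratio_bound_def using assms
    by (intro tendsto_intros lim_1_over_n lim_const_over_n) auto
  then show ?thesis using assms by (simp add: zero_power)
qed

lemma H_max_div_E_exp_ge_density_ratio_bound: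
  assumes p: "0 < p" "p < 1" and r: "2 \<le> r" "r < k" "r < n"
    and pos: "0 < density_ratio_bound p r k n" and "p * real (n choose r) \<in> \<int>"
  defines "\<beta> \<equiv> real (k - r + 1)"
  shows "2 * real k / \<beta> / real n ^ r * (\<beta> * min 1 (density_ratio_bound p r k n) / (real k * p)) ^ n
         \<le> real (H_max r n p) / E_exp n p"
proof -
  obtain m where m: "real m = p * real (n choose r)"
    using \<open>p * real (n choose r) \<in> \<int>\<close> p
    by (metis Ints_cases mult_nonneg_nonneg less_imp_le of_nat_0_le_iff of_int_0_le_iff of_nat_nat)
  let ?N = "real n ^ (r - 1) + real (k choose r) * (real n / k) ^ r"
  let ?A = "2 * real k / \<beta> / real n ^ r"
  have le: "density_ratio_bound p r k n \<le> (real m - real n) / ?N"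
    unfolding m using density_ratio_ge[of p r n k] p r by simp
  have "0 < ?N" using r by (intro add_pos_nonneg) auto
  moreover have "0 < (real m - real n) / ?N" using pos le by linarith
  ultimately have "n \<le> m" by (simp add: zero_less_divide_iff)
  moreover have "real m \<le> real (n choose r)"
    unfolding m using p by (intro mult_left_le_one_le) auto
  then have "m \<le> n choose r" by simp
  ultimately have bound: "?A * (\<beta> * min 1 ((real m - real n) / ?N) / (real k * p)) ^ n
      \<le> real (H_max r n p) / E_exp n p"
    using H_max_div_E_exp_ge[OF p(1) r _ _ m] unfolding \<beta>_def by blast
  have "(\<beta> * min 1 (density_ratio_bound p r k n) / (real k * p)) ^ n
      \<le> (\<beta> * min 1 ((real m - real n) / ?N) / (real k * p)) ^ n"
    using le pos p by (auto simp: \<beta>_def intro!: power_mono divide_right_mono mult_left_mono)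
  then have "?A * (\<beta> * min 1 (density_ratio_bound p r k n) / (real k * p)) ^ n
      \<le> ?A * (\<beta> * min 1 ((real m - real n) / ?N) / (real k * p)) ^ n"
    by (rule mult_left_mono) (simp add: \<beta>_def)
  then show ?thesis using bound by (rule order_trans)
qed

lemma fact_less_fact_mult_power:
  assumes "3 \<le> r" "r < k"
  shows "fact k < fact (k - r + 1) * k ^ (r - 1)"
proof -
  have eq: "k - 1 - (r - 2) = k - r + 1" using assms by simp
  have "fact (k - r + 1) dvd (fact (k - 1) :: nat)" using assms by (intro fact_dvd) simp
  then have "(fact (k - 1) :: nat) = fact (k - r + 1) * (fact (k - 1) div fact (k - r + 1))"
    by (rule dvd_mult_div_cancel [symmetric])
  also have "\<dots> \<le> fact (k - r + 1) * (k - 1) ^ (r - 2)"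
  proof (rule mult_le_mono2)
    have "r - 2 \<le> k - 1" using assms by simp
    from fact_div_fact_le_pow[OF this]
    show "fact (k - 1) div fact (k - r + 1) \<le> (k - 1) ^ (r - 2)" by (simp only: eq)
  qed
  finally have "k * fact (k - 1) \<le> k * (fact (k - r + 1) * (k - 1) ^ (r - 2))" by simp
  moreover have "fact k = k * fact (k - 1)" using assms fact_reduce[of k, where 'a = nat] by simp
  ultimately have "fact k \<le> k * (fact (k - r + 1) * (k - 1) ^ (r - 2))" by simp
  also have "\<dots> < k * (fact (k - r + 1) * k ^ (r - 2))"
    using assms by (intro mult_strict_left_mono power_strict_mono) auto
  also have "\<dots> = fact (k - r + 1) * k ^ (r - 1)"
  proof -
    have "r - 1 = Suc (r - 2)" using assms by simp
    then show ?thesis by (simp only: power_Suc ac_simps)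
  qed
  finally show ?thesis .
qed

lemma fact_div_fact_mult_power_eq:
  assumes "r \<le> k"
  shows "fact k / (fact (k - r) * real k ^ r) = fact r * (real (k choose r) / real k ^ r)"
proof -
  have "(fact k :: real) = fact r * fact (k - r) * real (k choose r)"
    using binomial_fact_lemma[OF assms] by (metis of_nat_fact of_nat_mult)
  then show ?thesis by simp
qed

lemma fact_mult_power_div_fact_eq:
  assumes "r \<le> k" "0 < r"
  shows "fact (k - r + 1) * real k ^ (r - 1) / fact k
           = real (k - r + 1) / (real k * (fact k / (fact (k - r) * real k ^ r)))"
proof -
  have "real k ^ r = real k * real k ^ (r - 1)" using assms by (simp flip: power_Suc)
  moreover have "fact (k - r + 1) = real (k - r + 1) * fact (k - r)" by simp
  ultimately show ?thesis using assms by (simp add: field_simps)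
qed

lemma tendsto_log_poly_mult_power_div:
  fixes b c L :: real
  assumes y: "y \<longlonglongrightarrow> L" and "0 < L" "1 < b" "0 < c"
  shows "(\<lambda>n. log b (c / real n ^ r * y n ^ n) / real n) \<longlonglongrightarrow> log b L"
proof -
  have "\<forall>\<^sub>F n in sequentially. 0 < y n \<and> 0 < n"
    using order_tendstoD(1)[OF y \<open>0 < L\<close>] eventually_gt_at_top[of 0] by eventually_elim auto
  then have "\<forall>\<^sub>F n in sequentially. log b c / real n - real r * (ln (real n) / real n) / ln b + log b (y n)
      = log b (c / real n ^ r * y n ^ n) / real n"
  proof eventually_elim
    case (elim n)
    then have "log b (c / real n ^ r * y n ^ n) = log b c - real r * log b (real n) + real n * log b (y n)"
      using assms by (simp add: log_mult log_divide log_nat_power)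
    then show ?case unfolding log_def[of b "real n"] using elim by (simp add: field_simps)
  qed
  moreover have "(\<lambda>n. log b c / real n - real r * (ln (real n) / real n) / ln b + log b (y n))
      \<longlonglongrightarrow> 0 - real r * 0 / ln b + log b L"
    using assms by (intro tendsto_intros lim_const_over_n y
        filterlim_compose[OF ln_x_over_x_tendsto_0 filterlim_real_sequentially]) auto
  ultimately show ?thesis by (simp add: tendsto_cong)
qed

lemma exists_sublinear_exponent:
  fixes b c :: real
  assumes y: "y \<longlonglongrightarrow> b" and b: "1 < b" and "0 < c"
    and bound: "\<forall>\<^sub>F n in sequentially. P n \<longrightarrow> c / real n ^ r * y n ^ n \<le> \<rho> n"
  shows "\<exists>g. (\<lambda>n. g n / real n) \<longlonglongrightarrow> 0 \<and> (\<forall>\<^sub>F n in sequentially. P n \<longrightarrow> b powr (real n - g n) \<le> \<rho> n)"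
proof -
  define h where "h n = log b (c / real n ^ r * y n ^ n) / real n" for n
  define g where "g n = real n * max 0 (1 - h n)" for n
  have "h \<longlonglongrightarrow> 1"
    using tendsto_log_poly_mult_power_div[OF y _ b \<open>0 < c\<close>, where r = r] b
    unfolding h_def by simp
  then have "(\<lambda>n. max 0 (1 - h n)) \<longlonglongrightarrow> max 0 (1 - 1)" by (intro tendsto_intros)
  moreover have "\<forall>\<^sub>F n in sequentially. max 0 (1 - h n) = g n / real n"
    using eventually_gt_at_top[of 0] by eventually_elim (simp add: g_def)
  ultimately have "(\<lambda>n. g n / real n) \<longlonglongrightarrow> 0" by (simp add: tendsto_cong)
  moreover have "\<forall>\<^sub>F n in sequentially. 0 < y n" using order_tendstoD(1)[OF y] b by simp
  then have "\<forall>\<^sub>F n in sequentially. P n \<longrightarrow> b powr (real n - g n) \<le> \<rho> n"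
    using bound eventually_gt_at_top[of 0]
  proof eventually_elim
    case (elim n)
    then have pos: "0 < c / real n ^ r * y n ^ n" using \<open>0 < c\<close> by simp
    have "real n - g n = real n * min 1 (h n)" by (simp add: g_def min_def max_def algebra_simps)
    also have "\<dots> \<le> real n * h n" by (intro mult_left_mono) auto
    finally have "b powr (real n - g n) \<le> b powr (real n * h n)" using b by (intro powr_mono) auto
    also have "\<dots> = c / real n ^ r * y n ^ n"
      using elim pos b by (simp add: h_def)
    finally show ?case using elim by auto
  qed
  ultimately show ?thesis by blast
qed

lemma eventually_H_max_div_E_exp_ge:
  assumes p: "0 < p" "p < 1" and r: "2 \<le> r" "r < k" and q: "p < fact k / (fact (k - r) * real k ^ r)"
  shows "\<exists>y. y \<longlonglongrightarrow> fact (k - r + 1) * real k ^ (r - 1) / fact k \<and>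
           (\<forall>\<^sub>F n in sequentially. p * real (n choose r) \<in> \<int> \<longrightarrow>
              2 * real k / real (k - r + 1) / real n ^ r * y n ^ n \<le> real (H_max r n p) / E_exp n p)"
proof -
  define q where "q = fact r * (real (k choose r) / real k ^ r)"
  define y where "y n = real (k - r + 1) * min 1 (density_ratio_bound p r k n) / (real k * p)" for n
  have "p < q" using assms by (simp add: q_def fact_div_fact_mult_power_eq)
  have lim: "(\<lambda>n. density_ratio_bound p r k n) \<longlonglongrightarrow> p / q"
    unfolding q_def using tendsto_density_ratio_bound r by simp
  then have "y \<longlonglongrightarrow> real (k - r + 1) * min 1 (p / q) / (real k * p)"
    unfolding y_def using p r by (intro tendsto_intros) auto
  moreover have "real (k - r + 1) * min 1 (p / q) / (real k * p) = real (k - r + 1) / (real k * q)"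
    using \<open>p < q\<close> p by (simp add: min_def)
  moreover have "\<dots> = fact (k - r + 1) * real k ^ (r - 1) / fact k"
    using fact_mult_power_div_fact_eq[of r k] r by (simp add: q_def fact_div_fact_mult_power_eq)
  moreover have "\<forall>\<^sub>F n in sequentially. 0 < density_ratio_bound p r k n"
    using order_tendstoD(1)[OF lim] p \<open>p < q\<close> by simp
  then have "\<forall>\<^sub>F n in sequentially. p * real (n choose r) \<in> \<int> \<longrightarrow>
      2 * real k / real (k - r + 1) / real n ^ r * y n ^ n \<le> real (H_max r n p) / E_exp n p"
    using eventually_gt_at_top[of r]
  proof eventually_elim
    case (elim n)
    then show ?case unfolding y_def using H_max_div_E_exp_ge_density_ratio_bound[OF p r, of n] by blast
  qed
  ultimately show ?thesis by auto
qed

theorem theorem3: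
  fixes p :: real and r k :: nat
  assumes "0 < p" "p < 1" "r \<ge> 3"
    and "k \<ge> r + 1"
    and "fact k / (fact (k - r) * real k ^ r) > p"
    and "\<forall>j. r + 1 \<le> j \<and> j < k \<longrightarrow> \<not> (fact j / (fact (j - r) * real j ^ r) > p)"
  shows "\<exists>g :: nat \<Rightarrow> real. (\<lambda>n. g n / real n) \<longlonglongrightarrow> 0 \<and>
           (\<forall>\<^sub>F n in sequentially. p * real (n choose r) \<in> \<int> \<longrightarrow>
              real (H_max r n p) / E_exp n p
                \<ge> (fact (k - r + 1) * real k ^ (r - 1) / fact k) powr (real n - g n))"
proof -
  have r: "2 \<le> r" "r < k" using assms by auto
  obtain y where "y \<longlonglongrightarrow> fact (k - r + 1) * real k ^ (r - 1) / fact k"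
    and bound: "\<forall>\<^sub>F n in sequentially. p * real (n choose r) \<in> \<int> \<longrightarrow>
       2 * real k / real (k - r + 1) / real n ^ r * y n ^ n \<le> real (H_max r n p) / E_exp n p"
    using eventually_H_max_div_E_exp_ge[OF assms(1,2) r assms(5)] by blast
  moreover have "real (fact k) < real (fact (k - r + 1) * k ^ (r - 1))"
    using fact_less_fact_mult_power[of r k] assms by (simp only: of_nat_less_iff)
  then have "1 < fact (k - r + 1) * real k ^ (r - 1) / fact k"
    by (simp only: of_nat_fact of_nat_mult of_nat_power less_divide_eq_1_pos fact_gt_zero)
  ultimately show ?thesis using exists_sublinear_exponent[OF _ _ _ bound] r by auto
qed

end
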